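(* Let $\mu$ be the Möbius function of the Butcher--Connes--Kreimer Hopf algebra of rooted forests (the convolution inverse of $\zeta\equiv 1$ in its dual algebra). Then for every finite rooted forest $F$, \[ \mu(F)=\begin{cases}(-1)^n & \text{if $F$ consists of $n$ isolated root nodes (i.e. $n$ one-node trees)},\\ 0&\text{otherwise.}\end{cases} \]
   Context: Rooted forests are finite (possibly empty) disjoint unions of finite rooted trees (trees given by their nodes, each non-root node having a parent). The Butcher--Connes--Kreimer Hopf algebra is spanned by isomorphism classes of rooted forests with comultiplication $\Delta(F)=\sum_c P^c(F)\otimes R^c(F)$ over admissible cuts, where $P^c(F)$ is the pruned part and $R^c(F)$ the trunk; equivalently, the sum runs over subsets $U$ of nodes of $F$ closed under taking children, with $P^c(F)=U$ and $R^c(F)=F\setminus U$ carrying the induced forest structures. The dual algebra consists of functions $\varphi$ on isomorphism classes of rooted forests with convolution $(\varphi*\psi)(F)=\sum_{U}\varphi(U)\psi(F\setminus U)$ and unit $\delta(F)=1$ iff $F$ is empty. The zeta function is $\zeta\equiv1$ and the Möbius function is its convolution inverse. *)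

theory Defs
  imports Main
begin

text \<open>A finite rooted forest is given by a finite node set V (nodes are naturals)
  and a parent map; roots have no parent.  Nodes outside V carry no parent.\<close>

type_synonym forest = "nat set \<times> (nat \<Rightarrow> nat option)"

definition nodes :: "forest \<Rightarrow> nat set" where "nodes F = fst F"
definition par :: "forest \<Rightarrow> nat \<Rightarrow> nat option" where "par F = snd F"

definition parent_rel :: "forest \<Rightarrow> (nat \<times> nat) set" where
  "parent_rel F = {(v, p). par F v = Some p}"

definition wf_forest :: "forest \<Rightarrow> bool" where
  "wf_forest F \<longleftrightarrow> finite (nodes F)
     \<and> (\<forall>v. par F v \<noteq> None \<longrightarrow> v \<in> nodes F)
     \<and> (\<forall>v p. par F v = Some p \<longrightarrow> p \<in> nodes F)
     \<and> acyclic (parent_rel F)"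

definition forest_iso :: "forest \<Rightarrow> forest \<Rightarrow> bool" where
  "forest_iso F G \<longleftrightarrow> (\<exists>f. bij_betw f (nodes F) (nodes G)
      \<and> (\<forall>v\<in>nodes F. par G (f v) = map_option f (par F v)))"

text \<open>Subsets of nodes closed under taking children (admissible cuts: pruned parts).\<close>
definition child_closed :: "forest \<Rightarrow> nat set \<Rightarrow> bool" where
  "child_closed F U \<longleftrightarrow> U \<subseteq> nodes F
     \<and> (\<forall>x\<in>U. \<forall>y\<in>nodes F. par F y = Some x \<longrightarrow> y \<in> U)"

definition induced :: "forest \<Rightarrow> nat set \<Rightarrow> forest" where
  "induced F U = (U, \<lambda>v. if v \<in> U then
        (case par F v of Some p \<Rightarrow> if p \<in> U then Some p else None | None \<Rightarrow> None)
      else None)"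

definition conv :: "(forest \<Rightarrow> 'r::comm_ring_1) \<Rightarrow> (forest \<Rightarrow> 'r) \<Rightarrow> forest \<Rightarrow> 'r" where
  "conv \<phi> \<psi> F = (\<Sum>U\<in>{U. child_closed F U}.
       \<phi> (induced F U) * \<psi> (induced F (nodes F - U)))"

definition delta :: "forest \<Rightarrow> 'r::comm_ring_1" where
  "delta F = (if nodes F = {} then 1 else 0)"

definition zeta :: "forest \<Rightarrow> 'r::comm_ring_1" where
  "zeta F = 1"

text \<open>Functions on isomorphism classes of rooted forests.\<close>
definition iso_invariant :: "(forest \<Rightarrow> 'r) \<Rightarrow> bool" where
  "iso_invariant \<phi> \<longleftrightarrow> (\<forall>F G. wf_forest F \<longrightarrow> wf_forest G \<longrightarrow> forest_iso F G \<longrightarrow> \<phi> F = \<phi> G)"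

definition is_moebius :: "(forest \<Rightarrow> 'r::comm_ring_1) \<Rightarrow> bool" where
  "is_moebius \<mu> \<longleftrightarrow> iso_invariant \<mu>
     \<and> (\<forall>F. wf_forest F \<longrightarrow> conv \<mu> zeta F = delta F \<and> conv zeta \<mu> F = delta F)"

end

theory Submission
  imports Defs
begin

text \<open>
  Convolving with \<open>\<zeta>\<close> sums a function over all pruned parts of a forest, and the pruned part
  of largest size is the forest itself; hence a left inverse of \<open>\<zeta>\<close> is unique and it suffices
  to check that the proposed function \<open>\<mu>\<close> is one.  A pruned part \<open>U\<close> is discrete exactly
  when it consists of leaves, so \<open>(\<mu> * \<zeta>)(F)\<close> is the alternating sum over all subsets of the
  leaves of \<open>F\<close>, which vanishes because a nonempty forest has at least one leaf.
\<close>

lemma sum_Pow_minus_one_power_eq_0: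
  assumes "finite A" "A \<noteq> {}"
  shows "(\<Sum>X\<in>Pow A. (-1::'r::comm_ring_1) ^ card X) = 0"
proof -
  have "card A > 0"
    using assms by (simp add: card_gt_0_iff)
  then show ?thesis
    using prod_diff_conv_sum[OF assms(1), of "\<lambda>_. 1::'r" "\<lambda>_. 1"] by (simp add: power_0_left)
qed

lemma nodes_induced [simp]: "nodes (induced F U) = U"
  by (simp add: induced_def nodes_def)

lemma par_induced_eq_Some:
  "par (induced F U) v = Some p \<longleftrightarrow> v \<in> U \<and> p \<in> U \<and> par F v = Some p"
  by (auto simp: induced_def par_def split: option.splits)

lemma wf_forest_induced:
  assumes "wf_forest F" "U \<subseteq> nodes F"
  shows "wf_forest (induced F U)"
proof -
  have "parent_rel (induced F U) \<subseteq> parent_rel F"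
    by (auto simp: parent_rel_def par_induced_eq_Some)
  then have "acyclic (parent_rel (induced F U))"
    using assms(1) acyclic_subset unfolding wf_forest_def by blast
  moreover have "finite U"
    using assms finite_subset unfolding wf_forest_def by blast
  ultimately show ?thesis
    unfolding wf_forest_def nodes_induced
    by (auto simp: par_induced_eq_Some)
qed

lemma induced_nodes:
  assumes "wf_forest F"
  shows "induced F (nodes F) = F"
proof -
  have "par (induced F (nodes F)) v = par F v" for v
    using assms unfolding wf_forest_def
    by (cases "par F v") (auto simp: induced_def par_def)
  then have "snd (induced F (nodes F)) = snd F"
    by (simp add: par_def fun_eq_iff)
  moreover have "fst (induced F (nodes F)) = fst F"
    using nodes_induced[of F "nodes F"] by (simp add: nodes_def)
  ultimately show ?thesis
    by (simp add: prod_eq_iff)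
qed

lemma child_closed_nodes: "child_closed F (nodes F)"
  by (simp add: child_closed_def)

lemma finite_child_closed:
  assumes "wf_forest F"
  shows "finite {U. child_closed F U}"
  using assms unfolding wf_forest_def child_closed_def
  by (auto intro: finite_subset[of _ "Pow (nodes F)"])

lemma conv_zeta:
  assumes "wf_forest F"
  shows "conv \<phi> zeta F =
           \<phi> F + (\<Sum>U\<in>{U. child_closed F U} - {nodes F}. \<phi> (induced F U))"
  using finite_child_closed[OF assms] child_closed_nodes[of F]
  by (simp add: conv_def zeta_def sum.remove induced_nodes[OF assms])

lemma conv_zeta_cancel:
  assumes eq: "\<And>G. wf_forest G \<Longrightarrow> conv \<phi> zeta G = conv \<psi> zeta G"
    and "wf_forest F"
  shows "\<phi> F = \<psi> F"
  using \<open>wf_forest F\<close>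
proof (induction "card (nodes F)" arbitrary: F rule: less_induct)
  case less
  have IH: "\<phi> (induced F U) = \<psi> (induced F U)"
    if "U \<in> {U. child_closed F U} - {nodes F}" for U
  proof -
    from that have "U \<subseteq> nodes F" "U \<noteq> nodes F"
      by (auto simp: child_closed_def)
    moreover have "finite (nodes F)"
      using less.prems by (simp add: wf_forest_def)
    ultimately have "card (nodes (induced F U)) < card (nodes F)"
      by (simp add: psubset_card_mono)
    with less.hyps show ?thesis
      using wf_forest_induced[OF less.prems \<open>U \<subseteq> nodes F\<close>] by blast
  qed
  from eq[OF less.prems] show ?case
    by (simp add: conv_zeta[OF less.prems] IH)
qed

definition leaves :: "forest \<Rightarrow> nat set" where
  "leaves F = {x \<in> nodes F. \<forall>y. par F y \<noteq> Some x}"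

definition discrete_forest :: "forest \<Rightarrow> bool" where
  "discrete_forest F \<longleftrightarrow> (\<forall>v\<in>nodes F. par F v = None)"

lemma leaves_nonempty:
  assumes "wf_forest F" "nodes F \<noteq> {}"
  shows "leaves F \<noteq> {}"
proof -
  have "parent_rel F \<subseteq> nodes F \<times> nodes F"
    using assms(1) by (auto simp: wf_forest_def parent_rel_def)
  then have "finite (parent_rel F)"
    using assms(1) finite_subset unfolding wf_forest_def by blast
  then have "wf (parent_rel F)"
    using assms(1) finite_acyclic_wf unfolding wf_forest_def by blast
  then obtain z where "z \<in> nodes F" "\<forall>y. (y, z) \<in> parent_rel F \<longrightarrow> y \<notin> nodes F"
    using assms(2) wf_eq_minimal by (metis ex_in_conv)
  with assms(1) have "z \<in> leaves F"
    by (auto simp: leaves_def parent_rel_def wf_forest_def)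
  then show ?thesis by blast
qed

lemma child_closed_subset_leaves:
  "U \<subseteq> leaves F \<Longrightarrow> child_closed F U"
  by (auto simp: leaves_def child_closed_def)

lemma discrete_induced_iff_subset_leaves:
  assumes "wf_forest F" "child_closed F U"
  shows "discrete_forest (induced F U) \<longleftrightarrow> U \<subseteq> leaves F"
proof
  assume discrete: "discrete_forest (induced F U)"
  show "U \<subseteq> leaves F"
  proof
    fix x assume "x \<in> U"
    have "par F y \<noteq> Some x" for y
    proof
      assume "par F y = Some x"
      moreover from this have "y \<in> U"
        using assms \<open>x \<in> U\<close> by (auto simp: wf_forest_def child_closed_def)
      ultimately have "par (induced F U) y = Some x"
        using \<open>x \<in> U\<close> by (simp add: par_induced_eq_Some)
      with discrete \<open>y \<in> U\<close> show False
        by (simp add: discrete_forest_def)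
    qed
    with \<open>x \<in> U\<close> assms(2) show "x \<in> leaves F"
      by (auto simp: leaves_def child_closed_def)
  qed
next
  assume "U \<subseteq> leaves F"
  have "par (induced F U) v = None" for v
  proof (cases "par (induced F U) v")
    case (Some p)
    with \<open>U \<subseteq> leaves F\<close> show ?thesis
      by (auto simp: par_induced_eq_Some leaves_def)
  qed
  then show "discrete_forest (induced F U)"
    by (simp add: discrete_forest_def)
qed

definition forest_moebius :: "forest \<Rightarrow> 'r::comm_ring_1" where
  "forest_moebius F = (if discrete_forest F then (-1) ^ card (nodes F) else 0)"

lemma conv_forest_moebius_zeta:
  assumes "wf_forest F"
  shows "conv forest_moebius zeta F = (delta F :: 'r::comm_ring_1)"
proof -
  have "conv forest_moebius zeta F =
          (\<Sum>U\<in>{U. child_closed F U}. if U \<in> Pow (leaves F) then (-1::'r) ^ card U else 0)"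
    unfolding conv_def zeta_def forest_moebius_def
    using discrete_induced_iff_subset_leaves[OF assms] by (intro sum.cong) auto
  also have "\<dots> = (\<Sum>U\<in>Pow (leaves F). (-1) ^ card U)"
  proof -
    have "{U. child_closed F U} \<inter> Pow (leaves F) = Pow (leaves F)"
      using child_closed_subset_leaves by blast
    then show ?thesis
      using sum.inter_restrict[OF finite_child_closed[OF assms],
          of "\<lambda>U. (-1::'r) ^ card U" "Pow (leaves F)"]
      by argo
  qed
  also have "\<dots> = delta F"
  proof (cases "nodes F = {}")
    case True
    then show ?thesis by (simp add: leaves_def delta_def)
  next
    case False
    have "finite (leaves F)"
      using assms by (simp add: leaves_def wf_forest_def)
    with False show ?thesis
      using leaves_nonempty[OF assms] sum_Pow_minus_one_power_eq_0 by (simp add: delta_def)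
  qed
  finally show ?thesis .
qed

theorem corollary3p6:
  fixes \<mu> :: "forest \<Rightarrow> 'r::comm_ring_1" and F :: forest
  assumes "is_moebius \<mu>"
    and "wf_forest F"
  shows "\<mu> F = (if (\<forall>v\<in>nodes F. par F v = None)
                 then (-1) ^ card (nodes F) else 0)"
proof -
  have "\<mu> F = forest_moebius F"
  proof (rule conv_zeta_cancel[OF _ assms(2)])
    fix G :: forest assume "wf_forest G"
    then have "conv \<mu> zeta G = delta G"
      using assms(1) unfolding is_moebius_def by blast
    then show "conv \<mu> zeta G = conv forest_moebius zeta G"
      using conv_forest_moebius_zeta[OF \<open>wf_forest G\<close>, where 'r='r] by simp
  qed
  then show ?thesis
    by (simp add: forest_moebius_def discrete_forest_def)
qed

end
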